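(* Let $\sigma\ge0$, $\gamma>0$, $V=\sqrt{1+\sigma}$, let $(n^\varepsilon,u^\varepsilon,\phi^\varepsilon)$ be the solitary wave solution and $\phi_R^\varepsilon=\phi^\varepsilon-\varepsilon n_{\mathrm{KdV}}$. There is $\varepsilon_1>0$ such that for every fixed $\xi_*>0$ there exists a constant $C_{\xi_*}>0$ (independent of $\varepsilon$, depending on $\xi_*$) with \[ \sup_{\xi\in[0,\xi_*]}\big(|(\phi_R^\varepsilon)'(\xi)|^2+|\phi_R^\varepsilon(\xi)|^2\big)\le C_{\xi_*}\varepsilon^4\qquad\text{for all }0<\varepsilon<\varepsilon_1. \]
   Context: For $\varepsilon>0$, consider the system in $\xi\in\mathbb{R}$: $-(V+\gamma\varepsilon)n'+(nu)'=0$, $-(V+\gamma\varepsilon)u'+uu'+\sigma n'/n=-\phi'$, $\varepsilon\phi''=e^\phi-n$, with $n\to1,u\to0,\phi\to0$ as $|\xi|\to\infty$. With $V=\sqrt{1+\sigma}$, for all sufficiently small $\varepsilon>0$ it has a non-trivial smooth solution unique up to translation; the "solitary wave solution" $(n^\varepsilon,u^\varepsilon,\phi^\varepsilon)$ is the translate that is even in $\xi$ and has all components strictly decreasing on $(0,\infty)$. Here $n_{\mathrm{KdV}}(\xi)=\frac{3\gamma}{V}\operatorname{sech}^2(\sqrt{V\gamma/2}\,\xi)$. *)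

theory Defs
  imports "HOL-Analysis.Analysis"
begin

definition smooth_fun :: "(real \<Rightarrow> real) \<Rightarrow> bool" where
  "smooth_fun f \<longleftrightarrow> (\<forall>k x. ((deriv ^^ k) f) differentiable (at x))"

definition wave_speed :: "real \<Rightarrow> real" where
  "wave_speed \<sigma> = sqrt (1 + \<sigma>)"

text \<open>Smooth solution of the travelling-wave Euler--Poisson system with the
  boundary conditions at infinity.  Positivity of the density is required so that
  the term sigma n'/n is meaningful.\<close>
definition is_wave_solution ::
  "real \<Rightarrow> real \<Rightarrow> real \<Rightarrow> (real \<Rightarrow> real) \<Rightarrow> (real \<Rightarrow> real) \<Rightarrow> (real \<Rightarrow> real) \<Rightarrow> bool" where
  "is_wave_solution \<sigma> \<gamma> \<epsilon> n u \<phi> \<longleftrightarrow>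
     smooth_fun n \<and> smooth_fun u \<and> smooth_fun \<phi> \<and> (\<forall>\<xi>. n \<xi> > 0) \<and>
     (\<forall>\<xi>. - (wave_speed \<sigma> + \<gamma> * \<epsilon>) * deriv n \<xi> + deriv (\<lambda>x. n x * u x) \<xi> = 0) \<and>
     (\<forall>\<xi>. - (wave_speed \<sigma> + \<gamma> * \<epsilon>) * deriv u \<xi> + u \<xi> * deriv u \<xi>
            + \<sigma> * deriv n \<xi> / n \<xi> = - deriv \<phi> \<xi>) \<and>
     (\<forall>\<xi>. \<epsilon> * deriv (deriv \<phi>) \<xi> = exp (\<phi> \<xi>) - n \<xi>) \<and>
     (n \<longlongrightarrow> 1) at_top \<and> (n \<longlongrightarrow> 1) at_bot \<and>
     (u \<longlongrightarrow> 0) at_top \<and> (u \<longlongrightarrow> 0) at_bot \<and>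
     (\<phi> \<longlongrightarrow> 0) at_top \<and> (\<phi> \<longlongrightarrow> 0) at_bot"

definition is_solitary_wave ::
  "real \<Rightarrow> real \<Rightarrow> real \<Rightarrow> (real \<Rightarrow> real) \<Rightarrow> (real \<Rightarrow> real) \<Rightarrow> (real \<Rightarrow> real) \<Rightarrow> bool" where
  "is_solitary_wave \<sigma> \<gamma> \<epsilon> n u \<phi> \<longleftrightarrow>
     is_wave_solution \<sigma> \<gamma> \<epsilon> n u \<phi> \<and>
     \<not> (n = (\<lambda>_. 1) \<and> u = (\<lambda>_. 0) \<and> \<phi> = (\<lambda>_. 0)) \<and>
     (\<forall>\<xi>. n (- \<xi>) = n \<xi> \<and> u (- \<xi>) = u \<xi> \<and> \<phi> (- \<xi>) = \<phi> \<xi>) \<and>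
     strict_antimono_on {0<..} n \<and> strict_antimono_on {0<..} u \<and> strict_antimono_on {0<..} \<phi>"

definition n_KdV :: "real \<Rightarrow> real \<Rightarrow> real \<Rightarrow> real" where
  "n_KdV \<sigma> \<gamma> \<xi> = 3 * \<gamma> / wave_speed \<sigma> *
      (1 / cosh (sqrt (wave_speed \<sigma> * \<gamma> / 2) * \<xi>)) ^ 2"

end

theory Submission
  imports Defs
begin

(* Eliminating u with the mass and momentum laws gives phi = wave_potential sigma c n with
   c = V + gamma eps.  Expanding the Poisson equation in eps and n - 1 shows that, as long as
   phi = O(eps),
     eps phi'' = 2 V gamma eps phi - V^2 phi^2 + R,   |R| <= kappa eps^2 phi
   with kappa depending only on sigma and gamma,
   which is the profile equation of eps n_KdV up to a relative error O(eps).  The energy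
   W = eps phi'^2/2 - V gamma eps phi^2 + V^2 phi^3/3 has W' = phi' R and vanishes at infinity,
   so |W| <= kappa eps^2 phi^2/2.  This bounds the amplitude by 6 gamma eps / V (at the level
   6 gamma eps / V the cubic term would make W too large), and at the crest, where phi' = 0, it
   gives phi(0) = eps n_KdV(0) + O(eps^2).  Then D = phi/eps - n_KdV satisfies
   D'' = (2 V gamma - V^2 (phi/eps + n_KdV)) D + O(eps) with D(0) = O(eps), D'(0) = 0, and
   Gronwall's inequality for D^2 + D'^2 on [0, xi_s] bounds eps^2 (D^2 + D'^2) by C eps^4. *)

section \<open>Elementary Taylor estimates\<close>

lemma abs_exp_minus_taylor2_le:
  fixes x :: real
  assumes "\<bar>x\<bar> \<le> 1"
  shows "\<bar>exp x - 1 - x - x^2/2\<bar> \<le> \<bar>x\<bar>^3"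
proof -
  obtain t where t: "\<bar>t\<bar> \<le> \<bar>x\<bar>" "exp x = (\<Sum>m<3. x^m / fact m) + exp t / fact 3 * x^3"
    using Maclaurin_exp_le[of x 3] by blast
  have "(\<Sum>m<3. x^m / fact m) = 1 + x + x^2/2"
    by (simp add: numeral_3_eq_3 power2_eq_square)
  then have "\<bar>exp x - 1 - x - x^2/2\<bar> = exp t / 6 * \<bar>x\<bar>^3"
    using t(2) by (simp add: abs_mult power_abs fact_numeral)
  also have "\<dots> \<le> 1 * \<bar>x\<bar>^3"
  proof (rule mult_right_mono)
    have "exp t \<le> exp 1" using t(1) assms by simp
    also have "exp (1::real) \<le> 6" using exp_le by simp
    finally show "exp t / 6 \<le> 1" by simp
  qed simp
  finally show ?thesis by simp
qed

lemma abs_ln_one_plus_minus_taylor2_le: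
  fixes y :: real
  assumes "0 \<le> y"
  shows "\<bar>ln (1 + y) - y + y^2/2\<bar> \<le> y^3"
proof -
  have "ln (1 + 0) - 0 + 0^2/2 \<le> ln (1 + y) - y + y^2/(2::real)"
  proof (rule DERIV_nonneg_imp_nondecreasing[OF assms])
    fix x :: real assume "0 \<le> x"
    then show "\<exists>D. ((\<lambda>x. ln (1 + x) - x + x^2/2) has_real_derivative D) (at x) \<and> 0 \<le> D"
      by (intro exI[of _ "x^2/(1 + x)"] conjI)
         (auto intro!: derivative_eq_intros simp: field_simps power2_eq_square)
  qed
  moreover have "0^3 - (ln (1 + 0) - 0 + 0^2/2) \<le> y^3 - (ln (1 + y) - y + y^2/(2::real))"
  proof (rule DERIV_nonneg_imp_nondecreasing[OF assms])
    fix x :: real assume x: "0 \<le> x"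
    have "x^2/(1 + x) \<le> x^2"
      using x by (simp add: divide_le_eq mult_le_cancel_left1 power2_eq_square)
    with x show "\<exists>D. ((\<lambda>x. x^3 - (ln (1 + x) - x + x^2/2)) has_real_derivative D) (at x) \<and> 0 \<le> D"
      by (intro exI[of _ "3*x^2 - x^2/(1 + x)"] conjI)
         (auto intro!: derivative_eq_intros simp: field_simps power2_eq_square)
  qed
  ultimately show ?thesis by simp
qed

lemma abs_one_minus_inverse_square_taylor2_le:
  fixes y :: real
  assumes "0 \<le> y"
  shows "\<bar>1 - 1/(1 + y)^2 - 2*y + 3*y^2\<bar> \<le> 4*y^3"
proof -
  have pos: "(1 + y)^2 > 0" using assms by simp
  have eq: "1 - 1/(1 + y)^2 - 2*y + 3*y^2 = y^3 * ((4 + 3*y) / (1 + y)^2)"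
    using pos by (simp add: field_simps) (simp add: algebra_simps power2_eq_square power3_eq_cube)
  have "4 + 3*y \<le> 4 * (1 + y)^2" using assms by (simp add: power2_eq_square algebra_simps)
  then have "(4 + 3*y) / (1 + y)^2 \<le> 4" using pos by (simp add: divide_le_eq)
  then have "y^3 * ((4 + 3*y) / (1 + y)^2) \<le> y^3 * 4" using assms by (intro mult_left_mono) auto
  moreover have "0 \<le> y^3 * ((4 + 3*y) / (1 + y)^2)" using assms by simp
  ultimately show ?thesis unfolding eq by (simp add: mult.commute)
qed

section \<open>The potential as a function of the density\<close>

text \<open>Integrating the mass and momentum equations gives u = c (1 - 1/n) and
  \<phi> = wave_potential \<sigma> c n, where c = V + \<gamma> \<epsilon>.\<close>
definition wave_potential :: "real \<Rightarrow> real \<Rightarrow> real \<Rightarrow> real" where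
  "wave_potential \<sigma> c n = c^2/2 * (1 - 1/n^2) - \<sigma> * ln n"

lemma wave_potential_taylor:
  assumes "0 \<le> \<sigma>" "0 \<le> y"
  shows "\<bar>wave_potential \<sigma> c (1 + y) - (c^2 - \<sigma>)*y + (3*c^2 - \<sigma>)/2 * y^2\<bar> \<le> (2*c^2 + \<sigma>) * y^3"
proof -
  have "wave_potential \<sigma> c (1 + y) - (c^2 - \<sigma>)*y + (3*c^2 - \<sigma>)/2 * y^2
      = c^2/2 * (1 - 1/(1 + y)^2 - 2*y + 3*y^2) - \<sigma> * (ln (1 + y) - y + y^2/2)"
    unfolding wave_potential_def by (simp add: field_simps)
  also have "\<bar>\<dots>\<bar> \<le> \<bar>c^2/2 * (1 - 1/(1 + y)^2 - 2*y + 3*y^2)\<bar> + \<bar>\<sigma> * (ln (1 + y) - y + y^2/2)\<bar>"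
    by (rule abs_triangle_ineq4)
  also have "\<dots> = c^2/2 * \<bar>1 - 1/(1 + y)^2 - 2*y + 3*y^2\<bar> + \<sigma> * \<bar>ln (1 + y) - y + y^2/2\<bar>"
    using assms(1) by (simp add: abs_mult)
  also have "\<dots> \<le> c^2/2 * (4*y^3) + \<sigma> * y^3"
    using assms abs_one_minus_inverse_square_taylor2_le abs_ln_one_plus_minus_taylor2_le
    by (intro add_mono mult_left_mono) auto
  finally show ?thesis by (simp add: algebra_simps)
qed

lemma wave_potential_expansion:
  assumes "0 \<le> \<sigma>" "c^2 = 1 + \<sigma> + d" "d \<le> 1" "0 \<le> y"
  shows "\<bar>wave_potential \<sigma> c (1 + y) - (1 + d)*y + (3*(1 + d)/2 + \<sigma>)*y^2\<bar> \<le> (4 + 3*\<sigma>)*y^3"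
proof -
  have eqs: "(3*c^2 - \<sigma>)/2 = 3*(1 + d)/2 + \<sigma>" "c^2 - \<sigma> = 1 + d"
    using assms(2) by simp_all
  have "\<bar>wave_potential \<sigma> c (1 + y) - (1 + d)*y + (3*(1 + d)/2 + \<sigma>)*y^2\<bar> \<le> (2*c^2 + \<sigma>) * y^3"
    using wave_potential_taylor[OF assms(1,4), of c] unfolding eqs .
  also have "\<dots> \<le> (4 + 3*\<sigma>) * y^3"
    using assms by (intro mult_right_mono) auto
  finally show ?thesis .
qed

lemma abs_wave_potential_minus_le:
  assumes "0 \<le> \<sigma>" "c^2 = 1 + \<sigma> + d" "0 \<le> d" "d \<le> 1" "0 \<le> y" "y \<le> 1"
  shows "\<bar>wave_potential \<sigma> c (1 + y) - y\<bar> \<le> d*y + (7 + 4*\<sigma>)*y^2"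
proof -
  define B where "B = 3*(1 + d)/2 + \<sigma>"
  define E where "E = wave_potential \<sigma> c (1 + y) - (1 + d)*y + B*y^2"
  have "\<bar>E\<bar> \<le> (4 + 3*\<sigma>)*y^3"
    unfolding E_def B_def using wave_potential_expansion assms by simp
  also have "\<dots> \<le> (4 + 3*\<sigma>)*y^2"
    using assms by (intro mult_left_mono) (auto simp: power_decreasing)
  finally have "\<bar>E\<bar> \<le> (4 + 3*\<sigma>)*y^2" .
  moreover have "B*y^2 \<le> (3 + \<sigma>)*y^2" "0 \<le> B*y^2" "0 \<le> d*y"
    unfolding B_def using assms by (simp_all add: mult_right_mono)
  moreover have "wave_potential \<sigma> c (1 + y) - y = d*y - B*y^2 + E"
    unfolding E_def by (simp add: algebra_simps)
  moreover have "(7 + 4*\<sigma>)*y^2 = (3 + \<sigma>)*y^2 + (4 + 3*\<sigma>)*y^2"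
    by (simp add: algebra_simps)
  ultimately show ?thesis unfolding abs_le_iff by linarith
qed

lemma window_imp_le:
  fixes \<sigma> y :: real
  assumes "0 \<le> \<sigma>" "0 \<le> y" "(28 + 16*\<sigma>)*y \<le> 1"
  shows "y \<le> 1/28"
proof -
  have "28*y \<le> (28 + 16*\<sigma>)*y" using assms(1,2) by (simp add: algebra_simps)
  with assms(3) show ?thesis by linarith
qed

lemma abs_wave_potential_minus_le_half:
  assumes "0 \<le> \<sigma>" "c^2 = 1 + \<sigma> + d" "0 \<le> d" "d \<le> 1/4" "0 \<le> y" "(28 + 16*\<sigma>)*y \<le> 1"
  shows "\<bar>wave_potential \<sigma> c (1 + y) - y\<bar> \<le> y/2"
proof -
  have "y \<le> 1" using window_imp_le assms by fastforce
  then have "\<bar>wave_potential \<sigma> c (1 + y) - y\<bar> \<le> d*y + ((7 + 4*\<sigma>)*y)*y"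
    using abs_wave_potential_minus_le assms by (simp add: power2_eq_square mult.assoc)
  also have "\<dots> \<le> 1/4*y + 1/4*y"
  proof -
    have "(7 + 4*\<sigma>)*y = (28 + 16*\<sigma>)*y / 4" by (simp add: algebra_simps)
    then have "(7 + 4*\<sigma>)*y \<le> 1/4" using assms(6) by linarith
    then show ?thesis using assms by (intro add_mono mult_right_mono) auto
  qed
  finally show ?thesis by simp
qed

lemma abs_exp_wave_potential_taylor2_le:
  assumes "0 \<le> \<sigma>" "c^2 = 1 + \<sigma> + d" "0 \<le> d" "d \<le> 1/4" "0 \<le> y" "(28 + 16*\<sigma>)*y \<le> 1"
  defines "H \<equiv> wave_potential \<sigma> c (1 + y)"
  shows "\<bar>exp H - 1 - H - H^2/2\<bar> \<le> 4*y^3"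
proof -
  have H: "\<bar>H\<bar> \<le> 3/2*y"
    using abs_wave_potential_minus_le_half[OF assms(1-6)] unfolding H_def abs_le_iff by linarith
  moreover have "y \<le> 1/28" using window_imp_le assms by blast
  ultimately have "\<bar>exp H - 1 - H - H^2/2\<bar> \<le> \<bar>H\<bar>^3"
    by (intro abs_exp_minus_taylor2_le) linarith
  also have "\<dots> \<le> (3/2*y)^3" using H by (intro power_mono) auto
  also have "\<dots> = 27/8 * y^3" by (simp add: power3_eq_cube)
  also have "\<dots> \<le> 4*y^3" using assms(5) by simp
  finally show ?thesis .
qed

lemma abs_wave_potential_square_minus_square_le:
  assumes "0 \<le> \<sigma>" "c^2 = 1 + \<sigma> + d" "0 \<le> d" "d \<le> 1/4" "0 \<le> y" "(28 + 16*\<sigma>)*y \<le> 1"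
  defines "H \<equiv> wave_potential \<sigma> c (1 + y)"
  shows "\<bar>(H - y)*(H + y)\<bar> \<le> 5/2*(d*y^2 + (7 + 4*\<sigma>)*y^3)"
proof -
  have "y \<le> 1/28" using window_imp_le assms by blast
  then have "\<bar>H - y\<bar> \<le> d*y + (7 + 4*\<sigma>)*y^2"
    unfolding H_def using abs_wave_potential_minus_le assms by simp
  moreover have "\<bar>H + y\<bar> \<le> 5/2*y"
    using abs_wave_potential_minus_le_half[OF assms(1-6)] unfolding H_def abs_le_iff by linarith
  ultimately have "\<bar>(H - y)*(H + y)\<bar> \<le> (d*y + (7 + 4*\<sigma>)*y^2) * (5/2*y)"
    unfolding abs_mult by (intro mult_mono) auto
  also have "\<dots> = 5/2*(d*y^2 + (7 + 4*\<sigma>)*y^3)"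
    by (simp add: algebra_simps power2_eq_square power3_eq_cube)
  finally show ?thesis .
qed

lemma wave_potential_residual:
  assumes "0 \<le> \<sigma>" "c^2 = 1 + \<sigma> + d" "0 \<le> d" "d \<le> 1/4" "0 \<le> y" "(28 + 16*\<sigma>)*y \<le> 1"
  defines "H \<equiv> wave_potential \<sigma> c (1 + y)"
  shows "\<bar>exp H - 1 - y - d*H + (1 + \<sigma>)*H^2\<bar> \<le> 40*(1 + \<sigma>)^2 * ((d + y)^2 * y)"
proof -
  define E where "E = H - (1 + d)*y + (3*(1 + d)/2 + \<sigma>)*y^2"
  define Q where "Q = (d + y)^2 * y"
  have Q: "d^2*y \<le> Q" "d*y^2 \<le> Q" "y^3 \<le> Q" "0 \<le> Q"
    unfolding Q_def using assms by (auto simp: power2_eq_square power3_eq_cube algebra_simps)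
  \<comment> \<open>Substituting the expansion of H cancels all terms of order below three in d and y.\<close>
  have "exp H - 1 - y - d*H + (1 + \<sigma>)*H^2
      = (exp H - 1 - H - H^2/2) - d^2*y + (3*d/2 + \<sigma>)*(d*y^2) + (1 - d)*E
        + (3/2 + \<sigma>)*((H - y)*(H + y))"
    unfolding E_def by (simp add: field_simps power2_eq_square)
  also have "\<bar>\<dots>\<bar> \<le> 4*Q + Q + (1 + \<sigma>)*Q + (4 + 3*\<sigma>)*Q + (3/2 + \<sigma>)*(5/2*((8 + 4*\<sigma>)*Q))"
  proof -
    have t1: "\<bar>exp H - 1 - H - H^2/2\<bar> \<le> 4*Q"
      using abs_exp_wave_potential_taylor2_le[OF assms(1-6)] Q(3) unfolding H_def by linarith
    have t3: "\<bar>(3*d/2 + \<sigma>)*(d*y^2)\<bar> \<le> (1 + \<sigma>)*Q"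
      unfolding abs_mult using assms Q by (intro mult_mono) auto
    have "\<bar>(1 - d)*E\<bar> \<le> \<bar>E\<bar>"
      using assms mult_left_le_one_le[of "\<bar>E\<bar>" "1 - d"] by (simp add: abs_mult)
    also have "\<dots> \<le> (4 + 3*\<sigma>)*y^3"
      unfolding E_def H_def using wave_potential_expansion assms by simp
    also have "\<dots> \<le> (4 + 3*\<sigma>)*Q"
      using assms Q by (intro mult_left_mono) auto
    finally have t4: "\<bar>(1 - d)*E\<bar> \<le> (4 + 3*\<sigma>)*Q" .
    have "5/2*(d*y^2 + (7 + 4*\<sigma>)*y^3) \<le> 5/2*((8 + 4*\<sigma>)*Q)"
      using Q assms mult_left_mono[OF Q(3), of "7 + 4*\<sigma>"] by (simp add: algebra_simps)
    then have "(3/2 + \<sigma>)*\<bar>(H - y)*(H + y)\<bar> \<le> (3/2 + \<sigma>)*(5/2*((8 + 4*\<sigma>)*Q))"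
      using abs_wave_potential_square_minus_square_le[OF assms(1-6)] assms
      unfolding H_def by (intro mult_left_mono) auto
    then have t5: "\<bar>(3/2 + \<sigma>)*((H - y)*(H + y))\<bar> \<le> (3/2 + \<sigma>)*(5/2*((8 + 4*\<sigma>)*Q))"
      using assms by (simp only: abs_mult[of "3/2 + \<sigma>"])
    have t2: "\<bar>d^2*y\<bar> \<le> Q" using Q assms by simp
    from t1 t2 t3 t4 t5 show ?thesis by linarith
  qed
  also have "\<dots> = (40 + 39*\<sigma> + 10*\<sigma>^2)*Q"
    by (simp add: algebra_simps power2_eq_square)
  also have "\<dots> \<le> 40*(1 + \<sigma>)^2*Q"
    using assms Q by (intro mult_right_mono) (auto simp: power2_eq_square algebra_simps)
  finally show ?thesis unfolding Q_def .
qed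

section \<open>Calculus on the real line\<close>

lemma smooth_fun_has_derivative:
  assumes "smooth_fun f"
  shows "(f has_real_derivative deriv f x) (at x)"
    and "(deriv f has_real_derivative deriv (deriv f) x) (at x)"
proof -
  have "((deriv ^^ 0) f) differentiable (at x)" "((deriv ^^ 1) f) differentiable (at x)"
    using assms unfolding smooth_fun_def by blast+
  then show "(f has_real_derivative deriv f x) (at x)"
    and "(deriv f has_real_derivative deriv (deriv f) x) (at x)"
    by (simp_all add: DERIV_deriv_iff_real_differentiable)
qed

lemma deriv_zero_tendsto_imp_eq:
  fixes F :: "real \<Rightarrow> real"
  assumes "\<And>x. (F has_real_derivative 0) (at x)" "(F \<longlongrightarrow> L) at_top"
  shows "F x = L"
proof -
  have const: "F y = F x" for y
    using DERIV_isconst_all[of F y x] assms(1) by blast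
  have "(F \<longlongrightarrow> F x) at_top"
    by (intro Lim_transform_eventually[OF tendsto_const] always_eventually) (metis const)
  from tendsto_unique[OF _ this assms(2)] show ?thesis by simp
qed

lemma strict_antimono_on_imp_antitone_from_zero:
  fixes f :: "real \<Rightarrow> real"
  assumes sm: "strict_antimono_on {0<..} f" and cont: "isCont f 0"
    and "0 \<le> x" "x \<le> y"
  shows "f y \<le> f x"
proof -
  have less: "f y \<le> f z" if "0 < z" "z \<le> y" for z
  proof (cases "z = y")
    case False
    with that have "z < y" "0 < y" by auto
    with sm \<open>0 < z\<close> show ?thesis unfolding monotone_on_def by (metis greaterThan_iff less_imp_le)
  qed simp
  have "f y \<le> f 0" if "0 < y"
  proof (rule tendsto_lowerbound)
    show "(f \<longlongrightarrow> f 0) (at_right 0)"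
      using cont unfolding isCont_def by (rule filterlim_mono) (simp_all add: at_le)
    show "eventually (\<lambda>z. f y \<le> f z) (at_right 0)"
      using eventually_at_right_real[OF that] by eventually_elim (simp add: less)
  qed simp
  with less assms(3,4) show ?thesis by (cases "x = 0"; cases "y = 0") auto
qed

lemma tendsto_imp_deriv_vanishes_along_sequence:
  fixes f f' :: "real \<Rightarrow> real"
  assumes deriv: "\<And>x. (f has_real_derivative f' x) (at x)" and lim: "(f \<longlongrightarrow> L) at_top"
  obtains t :: "nat \<Rightarrow> real"
  where "filterlim t at_top sequentially" "(\<lambda>k. f' (t k)) \<longlonglongrightarrow> 0"
proof -
  have "\<exists>s\<ge>B. \<bar>f' s\<bar> < \<delta>" if "0 < \<delta>" for B \<delta>
  proof -
    have "eventually (\<lambda>x. \<bar>f x - L\<bar> < \<delta>/2) at_top"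
      using tendstoD[OF lim, of "\<delta>/2"] that by (simp add: dist_real_def)
    then obtain B0 where B0: "\<And>x. x \<ge> B0 \<Longrightarrow> \<bar>f x - L\<bar> < \<delta>/2"
      unfolding eventually_at_top_linorder by blast
    define a where "a = max B B0"
    obtain z where z: "a < z" "f (a + 1) - f a = (a + 1 - a) * f' z"
      using MVT2[of a "a + 1" f f'] deriv by auto
    have "\<bar>f (a + 1) - L\<bar> < \<delta>/2" "\<bar>f a - L\<bar> < \<delta>/2" using B0 unfolding a_def by auto
    then have "\<bar>f' z\<bar> < \<delta>"
      using z(2) abs_triangle_ineq4[of "f (a + 1) - L" "f a - L"] by simp
    moreover have "z \<ge> B" using z(1) unfolding a_def by simp
    ultimately show ?thesis by blast
  qed
  then have "\<forall>k. \<exists>s. real k \<le> s \<and> \<bar>f' s\<bar> < inverse (real (Suc k))" by simp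
  then obtain t where t: "\<And>k. real k \<le> t k" "\<And>k. \<bar>f' (t k)\<bar> < inverse (real (Suc k))"
    by metis
  show thesis
  proof
    show "filterlim t at_top sequentially"
      using filterlim_real_sequentially by (rule filterlim_at_top_mono) (simp add: t(1))
    show "(\<lambda>k. f' (t k)) \<longlonglongrightarrow> 0"
      using LIMSEQ_inverse_real_of_nat
      by (rule Lim_null_comparison[rotated], intro always_eventually allI)
         (use t(2) in \<open>auto intro: less_imp_le\<close>)
  qed
qed

lemma abs_le_half_square_if_deriv_controlled:
  fixes G p p' r :: "real \<Rightarrow> real" and t :: "nat \<Rightarrow> real"
  assumes dG: "\<And>x. (G has_real_derivative p' x * r x) (at x)"
    and dp: "\<And>x. (p has_real_derivative p' x) (at x)"
    and p'_nonpos: "\<And>x. x0 \<le> x \<Longrightarrow> p' x \<le> 0"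
    and r_le: "\<And>x. x0 \<le> x \<Longrightarrow> \<bar>r x\<bar> \<le> \<kappa> * p x"
    and t: "filterlim t at_top sequentially" "(\<lambda>k. G (t k)) \<longlonglongrightarrow> 0" "(\<lambda>k. p (t k)) \<longlonglongrightarrow> 0"
    and "x0 \<le> x"
  shows "\<bar>G x\<bar> \<le> \<kappa> * (p x)^2 / 2"
proof -
  define Q where "Q x = \<kappa> * (p x)^2 / 2" for x
  have dQ: "(Q has_real_derivative p' x * (\<kappa> * p x)) (at x)" for x
    unfolding Q_def using DERIV_cdivide[OF DERIV_cmult[OF DERIV_mult[OF dp dp]], of \<kappa> 2 x]
    by (simp add: power2_eq_square algebra_simps)
  \<comment> \<open>For s = 1 and s = -1, s * G + Q decreases and tends to 0 along t.\<close>
  have "0 \<le> s * G x + Q x" if "\<bar>s\<bar> = 1" for s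
  proof (rule tendsto_upperbound)
    have "s * G z + Q z \<le> s * G y + Q y" if "x0 \<le> y" "y \<le> z" for y z
    proof (rule DERIV_nonpos_imp_nonincreasing[OF that(2)])
      fix w assume "y \<le> w" "w \<le> z"
      with that have "\<bar>s * r w\<bar> \<le> \<kappa> * p w" "p' w \<le> 0"
        using \<open>\<bar>s\<bar> = 1\<close> r_le[of w] p'_nonpos[of w] by (simp_all add: abs_mult)
      then have "p' w * (s * r w + \<kappa> * p w) \<le> 0"
        unfolding abs_le_iff by (intro mult_nonpos_nonneg) linarith+
      then show "\<exists>D. ((\<lambda>x. s * G x + Q x) has_real_derivative D) (at w) \<and> D \<le> 0"
        using DERIV_add[OF DERIV_cmult[OF dG] dQ, of s w]
        by (intro exI[of _ "s * (p' w * r w) + p' w * (\<kappa> * p w)"]) (simp add: algebra_simps)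
    qed
    moreover have "eventually (\<lambda>k. x \<le> t k) sequentially"
      using t(1) by (simp add: filterlim_at_top)
    ultimately show "eventually (\<lambda>k. s * G (t k) + Q (t k) \<le> s * G x + Q x) sequentially"
      using \<open>x0 \<le> x\<close> by (auto elim: eventually_mono)
    show "(\<lambda>k. s * G (t k) + Q (t k)) \<longlonglongrightarrow> 0"
      unfolding Q_def using t(2,3) by (auto intro!: tendsto_eq_intros)
  qed simp
  from this[of 1] this[of "-1"] show ?thesis unfolding Q_def by (simp add: abs_le_iff)
qed

lemma two_mul_add_le_sum_squares:
  fixes u v w L b :: real
  assumes "\<bar>w\<bar> \<le> L * \<bar>u\<bar> + b" "0 \<le> L"
  shows "2 * v * (u + w) \<le> (2 + L) * (u^2 + v^2) + b^2"
proof -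
  have amgm: "2 * x * y \<le> x^2 + y^2" for x y :: real
    using sum_squares_ge_zero[of "x - y" 0] by (simp add: algebra_simps power2_eq_square)
  have "2 * v * w \<le> 2 * \<bar>v\<bar> * \<bar>w\<bar>"
    by (simp add: abs_mult[symmetric] mult.assoc)
  also have "\<dots> \<le> 2 * \<bar>v\<bar> * (L * \<bar>u\<bar> + b)"
    using assms(1) by (simp add: mult_left_mono)
  also have "\<dots> = L * (2 * \<bar>u\<bar> * \<bar>v\<bar>) + 2 * \<bar>v\<bar> * b"
    by (simp add: algebra_simps)
  also have "\<dots> \<le> L * (u^2 + v^2) + (v^2 + b^2)"
    using amgm[of "\<bar>u\<bar>" "\<bar>v\<bar>"] amgm[of "\<bar>v\<bar>" b] assms(2)
    by (intro add_mono mult_left_mono) auto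
  finally have "2 * v * w \<le> L * (u^2 + v^2) + v^2 + b^2" by simp
  moreover have "2 * v * u \<le> u^2 + v^2" using amgm[of v u] by simp
  moreover have "2 * v * (u + w) = 2 * v * u + 2 * v * w"
    "(2 + L) * (u^2 + v^2) = 2 * u^2 + 2 * v^2 + L * (u^2 + v^2)"
    by (simp_all add: algebra_simps)
  ultimately show ?thesis using zero_le_power2[of u] by linarith
qed

lemma second_order_gronwall:
  fixes D D' D'' :: "real \<Rightarrow> real"
  assumes dD: "\<And>x. (D has_real_derivative D' x) (at x)"
    and dD': "\<And>x. (D' has_real_derivative D'' x) (at x)"
    and bound: "\<And>x. 0 \<le> x \<Longrightarrow> \<bar>D'' x\<bar> \<le> L * \<bar>D x\<bar> + b"
    and "0 \<le> L" "0 \<le> b" "0 \<le> x"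
  shows "(D x)^2 + (D' x)^2 \<le> ((D 0)^2 + (D' 0)^2 + b^2) * exp ((2 + L) * x)"
proof -
  define k where "k = 2 + L"
  define E where "E x = (D x)^2 + (D' x)^2" for x
  define F where "F x = (E x + b^2 / k) * exp (- k * x)" for x
  have k: "2 \<le> k" unfolding k_def using \<open>0 \<le> L\<close> by simp
  have "F x \<le> F 0"
  proof (rule DERIV_nonpos_imp_nonincreasing[OF \<open>0 \<le> x\<close>])
    fix s assume "0 \<le> s" "s \<le> x"
    have "2 * D' s * (D s + D'' s) \<le> k * E s + b^2"
      using two_mul_add_le_sum_squares[OF bound[OF \<open>0 \<le> s\<close>] \<open>0 \<le> L\<close>]
      unfolding E_def k_def .
    moreover have "k * (E s + b^2 / k) = k * E s + b^2" using k by (simp add: field_simps)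
    ultimately have "(2 * D' s * (D s + D'' s) - k * (E s + b^2 / k)) * exp (- k * s) \<le> 0"
      by (intro mult_nonpos_nonneg) auto
    moreover have "(F has_real_derivative
        (2 * D' s * (D s + D'' s) - k * (E s + b^2 / k)) * exp (- k * s)) (at s)"
      unfolding F_def E_def by (rule derivative_eq_intros dD dD' refl)+ (simp add: algebra_simps)
    ultimately show "\<exists>y. (F has_real_derivative y) (at s) \<and> y \<le> 0" by blast
  qed
  then have "E x + b^2 / k \<le> (E 0 + b^2 / k) * exp (k * x)"
    unfolding F_def by (simp add: exp_minus field_simps)
  also have "\<dots> \<le> (E 0 + b^2) * exp (k * x)"
    using k mult_left_mono[of 1 k "b^2"] by (intro mult_right_mono add_left_mono) (auto simp: divide_le_eq)
  finally have "E x + b^2 / k \<le> (E 0 + b^2) * exp (k * x)" .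
  moreover have "0 \<le> b^2 / k" using k by simp
  ultimately show ?thesis unfolding E_def k_def by linarith
qed

section \<open>The KdV soliton\<close>

lemma wave_speed_ge_one: "0 \<le> \<sigma> \<Longrightarrow> 1 \<le> wave_speed \<sigma>"
  unfolding wave_speed_def by simp

lemma wave_speed_square: "0 \<le> \<sigma> \<Longrightarrow> (wave_speed \<sigma>)^2 = 1 + \<sigma>"
  unfolding wave_speed_def by simp

lemma n_KdV_eq:
  "n_KdV \<sigma> \<gamma> = (\<lambda>x. 3 * \<gamma> / wave_speed \<sigma> / (cosh (sqrt (wave_speed \<sigma> * \<gamma> / 2) * x))^2)"
  unfolding n_KdV_def by (simp add: fun_eq_iff power_one_over)

lemma n_KdV_bounds:
  assumes "0 \<le> \<sigma>" "0 \<le> \<gamma>"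
  shows "n_KdV \<sigma> \<gamma> 0 = 3 * \<gamma> / wave_speed \<sigma>"
    and "0 \<le> n_KdV \<sigma> \<gamma> x"
    and "n_KdV \<sigma> \<gamma> x \<le> 3 * \<gamma> / wave_speed \<sigma>"
proof -
  have A: "0 \<le> 3 * \<gamma> / wave_speed \<sigma>"
    using assms wave_speed_ge_one[of \<sigma>] by simp
  show "n_KdV \<sigma> \<gamma> 0 = 3 * \<gamma> / wave_speed \<sigma>" unfolding n_KdV_eq by simp
  show "0 \<le> n_KdV \<sigma> \<gamma> x" unfolding n_KdV_eq by (rule divide_nonneg_nonneg[OF A]) simp
  have "1 \<le> (cosh (sqrt (wave_speed \<sigma> * \<gamma> / 2) * x))^2"
    using cosh_real_ge_1 by simp
  then have "3 * \<gamma> / wave_speed \<sigma> / (cosh (sqrt (wave_speed \<sigma> * \<gamma> / 2) * x))^2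
      \<le> 3 * \<gamma> / wave_speed \<sigma> / 1"
    using A by (intro divide_left_mono) auto
  then show "n_KdV \<sigma> \<gamma> x \<le> 3 * \<gamma> / wave_speed \<sigma>" unfolding n_KdV_eq by simp
qed

lemma n_KdV_derivatives:
  assumes "0 \<le> \<sigma>" "0 \<le> \<gamma>"
  defines "V \<equiv> wave_speed \<sigma>"
  shows "(n_KdV \<sigma> \<gamma> has_real_derivative deriv (n_KdV \<sigma> \<gamma>) x) (at x)"
    and "(deriv (n_KdV \<sigma> \<gamma>) has_real_derivative 2*V*\<gamma> * n_KdV \<sigma> \<gamma> x - V^2 * (n_KdV \<sigma> \<gamma> x)^2) (at x)"
    and "deriv (n_KdV \<sigma> \<gamma>) 0 = 0"
proof -
  define A where "A = 3 * \<gamma> / V"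
  define k where "k = sqrt (V * \<gamma> / 2)"
  define N' where "N' x = -2 * A * k * sinh (k * x) / (cosh (k * x))^3" for x
  have V: "1 \<le> V" unfolding V_def using assms(1) by (rule wave_speed_ge_one)
  have k2: "k^2 = V * \<gamma> / 2" unfolding k_def using V assms by simp
  have N: "n_KdV \<sigma> \<gamma> = (\<lambda>x. A / (cosh (k * x))^2)"
    unfolding n_KdV_eq A_def k_def V_def ..
  have cosh: "cosh (k * x) > 0" for x by (rule cosh_real_pos)
  have dN: "(n_KdV \<sigma> \<gamma> has_real_derivative N' x) (at x)" for x
    unfolding N N'_def
    by (rule DERIV_cong, (rule derivative_intros)+)
       (use cosh[of x] in \<open>simp_all add: power2_eq_square power3_eq_cube field_simps\<close>)
  then have deriv_N: "deriv (n_KdV \<sigma> \<gamma>) = N'"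
    by (intro ext DERIV_imp_deriv)
  show "(n_KdV \<sigma> \<gamma> has_real_derivative deriv (n_KdV \<sigma> \<gamma>) x) (at x)"
    unfolding deriv_N by (rule dN)
  show "deriv (n_KdV \<sigma> \<gamma>) 0 = 0" unfolding deriv_N N'_def by simp
  have sinh2: "(sinh (k * x))^2 = (cosh (k * x))^2 - 1" by (simp add: cosh_square_eq)
  have "(N' has_real_derivative
      -2 * A * k^2 * ((cosh (k * x))^2 - 3 * (sinh (k * x))^2) / (cosh (k * x))^4) (at x)"
    unfolding N'_def
    by (rule DERIV_cong, (rule derivative_intros)+)
       (use cosh[of x] in \<open>simp_all add: field_simps power2_eq_square power3_eq_cube power4_eq_xxxx\<close>)
  moreover have "-2 * A * k^2 * ((cosh (k * x))^2 - 3 * (sinh (k * x))^2) / (cosh (k * x))^4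
      = 2*V*\<gamma> * (A / (cosh (k * x))^2) - V^2 * (A / (cosh (k * x))^2)^2"
    unfolding sinh2 k2 A_def using V cosh[of x]
    by (simp add: field_simps power2_eq_square power4_eq_xxxx)
  ultimately have "(N' has_real_derivative 2*V*\<gamma> * (A / (cosh (k * x))^2) - V^2 * (A / (cosh (k * x))^2)^2) (at x)"
    by simp
  then show "(deriv (n_KdV \<sigma> \<gamma>) has_real_derivative 2*V*\<gamma> * n_KdV \<sigma> \<gamma> x - V^2 * (n_KdV \<sigma> \<gamma> x)^2) (at x)"
    unfolding deriv_N unfolding N .
qed

lemma wave_solution_conservation_laws:
  assumes "is_wave_solution \<sigma> \<gamma> \<epsilon> n u \<phi>"
  defines "c \<equiv> wave_speed \<sigma> + \<gamma> * \<epsilon>"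
  shows "n x * (u x - c) = - c"
    and "- c * u x + (u x)^2 / 2 + \<sigma> * ln (n x) + \<phi> x = 0"
proof -
  note W = assms(1)[unfolded is_wave_solution_def, folded c_def]
  have n_pos: "\<And>x. 0 < n x" using W by blast
  have dn: "\<And>x. (n has_real_derivative deriv n x) (at x)"
    and du: "\<And>x. (u has_real_derivative deriv u x) (at x)"
    and dphi: "\<And>x. (\<phi> has_real_derivative deriv \<phi> x) (at x)"
    using W smooth_fun_has_derivative(1) by blast+
  have lim: "(n \<longlongrightarrow> 1) at_top" "(u \<longlongrightarrow> 0) at_top" "(\<phi> \<longlongrightarrow> 0) at_top" using W by blast+
  show "n x * (u x - c) = - c"
  proof (rule deriv_zero_tendsto_imp_eq[where F = "\<lambda>x. n x * (u x - c)"])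
    fix x
    have "deriv (\<lambda>x. n x * u x) x = deriv n x * u x + n x * deriv u x"
      by (rule DERIV_imp_deriv) (auto intro!: derivative_eq_intros dn du)
    then show "((\<lambda>x. n x * (u x - c)) has_real_derivative 0) (at x)"
      using W by (auto intro!: derivative_eq_intros dn du simp: algebra_simps)
    show "((\<lambda>x. n x * (u x - c)) \<longlongrightarrow> - c) at_top"
      using tendsto_mult[OF lim(1) tendsto_diff[OF lim(2) tendsto_const[of c]]] by simp
  qed
  show "- c * u x + (u x)^2 / 2 + \<sigma> * ln (n x) + \<phi> x = 0"
  proof (rule deriv_zero_tendsto_imp_eq[where F = "\<lambda>x. - c * u x + (u x)^2 / 2 + \<sigma> * ln (n x) + \<phi> x"])
    fix x
    have "- c * deriv u x + u x * deriv u x + \<sigma> * deriv n x / n x + deriv \<phi> x = 0"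
      using W by (simp add: algebra_simps)
    then show "((\<lambda>x. - c * u x + (u x)^2 / 2 + \<sigma> * ln (n x) + \<phi> x) has_real_derivative 0) (at x)"
      using n_pos[of x]
      by (auto intro!: derivative_eq_intros dn du dphi simp: field_simps power2_eq_square)
    show "((\<lambda>x. - c * u x + (u x)^2 / 2 + \<sigma> * ln (n x) + \<phi> x) \<longlongrightarrow> 0) at_top"
      by (auto intro!: tendsto_eq_intros lim)
  qed
qed

lemma wave_solution_potential:
  assumes "is_wave_solution \<sigma> \<gamma> \<epsilon> n u \<phi>"
  shows "\<phi> x = wave_potential \<sigma> (wave_speed \<sigma> + \<gamma> * \<epsilon>) (n x)"
proof -
  define c where "c = wave_speed \<sigma> + \<gamma> * \<epsilon>"
  have n_pos: "0 < n x" using assms unfolding is_wave_solution_def by blast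
  note laws = wave_solution_conservation_laws[OF assms, folded c_def]
  have u: "u x = c * (1 - 1 / n x)"
    using laws(1)[of x] n_pos by (simp add: field_simps)
  have "\<phi> x = c * u x - (u x)^2 / 2 - \<sigma> * ln (n x)"
    using laws(2)[of x] by linarith
  also have "\<dots> = wave_potential \<sigma> c (n x)"
    unfolding u wave_potential_def using n_pos by (simp add: field_simps power2_eq_square)
  finally show ?thesis unfolding c_def .
qed

text \<open>The energy of the KdV profile equation \<epsilon> q'' = 2 V \<gamma> \<epsilon> q - V^2 q^2.\<close>
definition wave_energy :: "real \<Rightarrow> real \<Rightarrow> real \<Rightarrow> real \<Rightarrow> real \<Rightarrow> real" where
  "wave_energy \<epsilon> V \<gamma> q q' = \<epsilon> * q'^2 / 2 - V * \<gamma> * \<epsilon> * q^2 + V^2 * q^3 / 3"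

locale solitary_wave =
  fixes \<sigma> \<gamma> \<epsilon> :: real and n u \<phi> :: "real \<Rightarrow> real"
  assumes sigma_nonneg: "0 \<le> \<sigma>" and gamma_pos: "0 < \<gamma>" and eps_pos: "0 < \<epsilon>"
    and solitary: "is_solitary_wave \<sigma> \<gamma> \<epsilon> n u \<phi>"
begin

abbreviation V where "V \<equiv> wave_speed \<sigma>"

text \<open>By the Poisson equation, \<epsilon> \<phi>'' = 2 V \<gamma> \<epsilon> \<phi> - V^2 \<phi>^2 + residual.\<close>
definition residual :: "real \<Rightarrow> real" where
  "residual x = exp (\<phi> x) - n x - 2 * V * \<gamma> * \<epsilon> * \<phi> x + V^2 * (\<phi> x)^2"

lemma wave_solution: "is_wave_solution \<sigma> \<gamma> \<epsilon> n u \<phi>"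
  using solitary unfolding is_solitary_wave_def by simp

lemma phi_has_derivative:
  "(\<phi> has_real_derivative deriv \<phi> x) (at x)"
  "(deriv \<phi> has_real_derivative deriv (deriv \<phi>) x) (at x)"
  using wave_solution smooth_fun_has_derivative unfolding is_wave_solution_def by blast+

lemma poisson: "\<epsilon> * deriv (deriv \<phi>) x = exp (\<phi> x) - n x"
  using wave_solution unfolding is_wave_solution_def by blast

lemma phi_eq_wave_potential: "\<phi> x = wave_potential \<sigma> (V + \<gamma> * \<epsilon>) (n x)"
  using wave_solution by (rule wave_solution_potential)

lemma limits_at_top: "(n \<longlongrightarrow> 1) at_top" "(\<phi> \<longlongrightarrow> 0) at_top"
  using wave_solution unfolding is_wave_solution_def by blast+

lemma continuous: "isCont n x" "isCont \<phi> x"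
  using wave_solution smooth_fun_has_derivative(1)[THEN DERIV_isCont]
  unfolding is_wave_solution_def by blast+

lemma antitone:
  assumes "0 \<le> x" "x \<le> y"
  shows "\<phi> y \<le> \<phi> x" "n y \<le> n x"
  using solitary continuous assms strict_antimono_on_imp_antitone_from_zero
  unfolding is_solitary_wave_def by blast+

lemma eventually_below:
  assumes "0 \<le> x"
  shows "eventually (\<lambda>y. \<phi> y \<le> \<phi> x) at_top" "eventually (\<lambda>y. n y \<le> n x) at_top"
  using antitone assms unfolding eventually_at_top_linorder by blast+

lemma phi_nonneg: "0 \<le> x \<Longrightarrow> 0 \<le> \<phi> x"
  using tendsto_upperbound[OF limits_at_top(2) eventually_below(1)] by simp

lemma n_ge_one: "0 \<le> x \<Longrightarrow> 1 \<le> n x"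
  using tendsto_upperbound[OF limits_at_top(1) eventually_below(2)] by simp

lemma deriv_phi_nonpos:
  assumes "0 \<le> x"
  shows "deriv \<phi> x \<le> 0"
proof (rule ccontr)
  assume "\<not> deriv \<phi> x \<le> 0"
  then have "0 < deriv \<phi> x" by simp
  then obtain d where "0 < d" "\<forall>h>0. h < d \<longrightarrow> \<phi> x < \<phi> (x + h)"
    using DERIV_pos_inc_right[OF phi_has_derivative(1)] by blast
  then have "\<phi> x < \<phi> (x + d/2)" by simp
  with antitone(1)[of x "x + d/2"] assms \<open>0 < d\<close> show False by simp
qed

lemma deriv_phi_zero: "deriv \<phi> 0 = 0"
proof (rule DERIV_local_max[OF phi_has_derivative(1)])
  have even: "\<phi> (- y) = \<phi> y" for y using solitary unfolding is_solitary_wave_def by blast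
  show "\<forall>y. \<bar>0 - y\<bar> < 1 \<longrightarrow> \<phi> y \<le> \<phi> 0"
  proof (intro allI impI)
    fix y :: real
    show "\<phi> y \<le> \<phi> 0"
      using antitone(1)[of 0 y] antitone(1)[of 0 "- y"] even[of y] by (cases "0 \<le> y") auto
  qed
qed simp

lemma phi_zero_pos: "0 < \<phi> 0"
proof -
  have "\<phi> 1 < \<phi> (1/2)"
    using solitary unfolding is_solitary_wave_def monotone_on_def by force
  then show ?thesis using antitone(1)[of 0 "1/2"] phi_nonneg[of 1] by simp
qed

lemma density_below:
  assumes "0 \<le> x0" "x0 \<le> x" "0 < t" and less: "\<phi> x0 < wave_potential \<sigma> (V + \<gamma> * \<epsilon>) (1 + t)"
  shows "n x < 1 + t"
proof (rule ccontr)
  assume "\<not> n x < 1 + t"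
  obtain B where B: "\<And>z. B \<le> z \<Longrightarrow> n z < 1 + t"
    using order_tendstoD(2)[OF limits_at_top(1), of "1 + t"] \<open>0 < t\<close>
    unfolding eventually_at_top_linorder by auto
  have "\<exists>y\<ge>x. y \<le> max x B \<and> n y = 1 + t"
    by (rule IVT2) (use B[of "max x B"] continuous(1) \<open>\<not> n x < 1 + t\<close> in auto)
  then obtain y where "x \<le> y" "n y = 1 + t" by blast
  with less antitone(1)[of x0 y] phi_eq_wave_potential[of y] assms show False by simp
qed

lemma wave_energy_has_derivative:
  "((\<lambda>x. wave_energy \<epsilon> V \<gamma> (\<phi> x) (deriv \<phi> x)) has_real_derivative deriv \<phi> x * residual x) (at x)"
proof -
  have residual: "residual x = \<epsilon> * deriv (deriv \<phi>) x - 2 * V * \<gamma> * \<epsilon> * \<phi> x + V^2 * (\<phi> x)^2"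
    unfolding residual_def poisson ..
  show ?thesis
    unfolding wave_energy_def residual
    by (auto intro!: derivative_eq_intros phi_has_derivative simp: algebra_simps power2_eq_square)
qed

lemma wave_energy_vanishes_at_infinity:
  obtains t :: "nat \<Rightarrow> real"
  where "filterlim t at_top sequentially" "(\<lambda>k. \<phi> (t k)) \<longlonglongrightarrow> 0"
    "(\<lambda>k. wave_energy \<epsilon> V \<gamma> (\<phi> (t k)) (deriv \<phi> (t k))) \<longlonglongrightarrow> 0"
proof -
  obtain t where t: "filterlim t at_top sequentially" "(\<lambda>k. deriv \<phi> (t k)) \<longlonglongrightarrow> 0"
    using tendsto_imp_deriv_vanishes_along_sequence[OF phi_has_derivative(1) limits_at_top(2)] .
  moreover have "(\<lambda>k. \<phi> (t k)) \<longlonglongrightarrow> 0"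
    using filterlim_compose[OF limits_at_top(2) t(1)] .
  moreover have "(\<lambda>k. wave_energy \<epsilon> V \<gamma> (\<phi> (t k)) (deriv \<phi> (t k))) \<longlonglongrightarrow> wave_energy \<epsilon> V \<gamma> 0 0"
    unfolding wave_energy_def by (intro tendsto_intros t(2) calculation) simp_all
  ultimately show thesis by (intro that) (simp_all add: wave_energy_def)
qed

end

section \<open>Comparison with the KdV soliton\<close>

text \<open>Twice the amplitude 3 \<gamma> / V of the KdV soliton.\<close>
definition amplitude_cap :: "real \<Rightarrow> real \<Rightarrow> real" where
  "amplitude_cap \<sigma> \<gamma> = 6 * \<gamma> / wave_speed \<sigma>"

definition density_window :: "real \<Rightarrow> real" where
  "density_window \<sigma> = 1 / (28 + 16 * \<sigma>)"

definition residual_const :: "real \<Rightarrow> real \<Rightarrow> real" where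
  "residual_const \<sigma> \<gamma> =
     80 * (1 + \<sigma>)^2 * (2 * wave_speed \<sigma> * \<gamma> + \<gamma>^2 + 2 * amplitude_cap \<sigma> \<gamma>)^2 + \<gamma>^2"

lemma amplitude_cap_pos: "0 \<le> \<sigma> \<Longrightarrow> 0 < \<gamma> \<Longrightarrow> 0 < amplitude_cap \<sigma> \<gamma>"
  unfolding amplitude_cap_def using wave_speed_ge_one[of \<sigma>] by simp

lemma n_KdV_le_amplitude_cap:
  assumes "0 \<le> \<sigma>" "0 < \<gamma>"
  shows "n_KdV \<sigma> \<gamma> x \<le> amplitude_cap \<sigma> \<gamma>"
proof -
  have "3 * \<gamma> / wave_speed \<sigma> \<le> amplitude_cap \<sigma> \<gamma>"
    unfolding amplitude_cap_def using assms wave_speed_ge_one[of \<sigma>] by (simp add: divide_right_mono)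
  then show ?thesis using n_KdV_bounds(3)[OF assms(1) less_imp_le[OF assms(2)], of x] by linarith
qed

lemma residual_const_pos: "0 < \<gamma> \<Longrightarrow> 0 < residual_const \<sigma> \<gamma>"
  unfolding residual_const_def by (simp add: add_nonneg_pos)

locale small_solitary_wave = solitary_wave +
  assumes eps_le_one: "\<epsilon> \<le> 1"
    and speed_excess_small: "(2 * V * \<gamma> + \<gamma>^2) * \<epsilon> \<le> 1/4"
    and amplitude_small: "2 * amplitude_cap \<sigma> \<gamma> * \<epsilon> < density_window \<sigma>"
    and residual_small: "residual_const \<sigma> \<gamma> * \<epsilon> < 2 * V * \<gamma>"
begin

abbreviation a where "a \<equiv> amplitude_cap \<sigma> \<gamma>"
abbreviation \<kappa> where "\<kappa> \<equiv> residual_const \<sigma> \<gamma>"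
abbreviation d where "d \<equiv> 2 * V * \<gamma> * \<epsilon> + (\<gamma> * \<epsilon>)^2"

lemma V_ge_one: "1 \<le> V"
  using sigma_nonneg by (rule wave_speed_ge_one)

lemma a_pos: "0 < a"
  using amplitude_cap_pos sigma_nonneg gamma_pos .

lemma kappa_pos: "0 < \<kappa>"
  using residual_const_pos gamma_pos .

lemma speed_square: "(V + \<gamma> * \<epsilon>)^2 = 1 + \<sigma> + d"
  using wave_speed_square[OF sigma_nonneg] by (simp add: power2_eq_square algebra_simps)

lemma speed_excess_bounds: "0 \<le> d" "d \<le> (2 * V * \<gamma> + \<gamma>^2) * \<epsilon>" "d \<le> 1/4"
proof -
  show "0 \<le> d" using V_ge_one gamma_pos eps_pos by simp
  have "(\<gamma> * \<epsilon>)^2 = (\<gamma>^2 * \<epsilon>) * \<epsilon>" by (simp add: power2_eq_square)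
  also have "\<dots> \<le> (\<gamma>^2 * \<epsilon>) * 1"
    using eps_pos eps_le_one by (intro mult_left_mono) auto
  finally have "(\<gamma> * \<epsilon>)^2 \<le> \<gamma>^2 * \<epsilon>" by simp
  then show "d \<le> (2 * V * \<gamma> + \<gamma>^2) * \<epsilon>" by (simp add: algebra_simps)
  with speed_excess_small show "d \<le> 1/4" by linarith
qed

lemma density_close_to_one:
  assumes "0 \<le> x0" "\<phi> x0 \<le> a * \<epsilon>" "x0 \<le> x"
  shows "n x - 1 \<le> density_window \<sigma>"
proof -
  define t where "t = density_window \<sigma>"
  have t: "0 < t" "(28 + 16 * \<sigma>) * t = 1"
    unfolding t_def density_window_def using sigma_nonneg by simp_all
  have "\<bar>wave_potential \<sigma> (V + \<gamma> * \<epsilon>) (1 + t) - t\<bar> \<le> t / 2"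
    using abs_wave_potential_minus_le_half[OF sigma_nonneg speed_square] speed_excess_bounds t
    by simp
  moreover have "a * \<epsilon> < t / 2" using amplitude_small unfolding t_def by simp
  ultimately have "\<phi> x0 < wave_potential \<sigma> (V + \<gamma> * \<epsilon>) (1 + t)"
    using assms(2) unfolding abs_le_iff by linarith
  then show ?thesis
    using density_below[OF assms(1,3) t(1)] unfolding t_def by simp
qed

lemma density_excess_bounds:
  assumes "0 \<le> x0" "\<phi> x0 \<le> a * \<epsilon>" "x0 \<le> x"
  shows "0 \<le> n x - 1" "(28 + 16 * \<sigma>) * (n x - 1) \<le> 1" "n x - 1 \<le> 2 * \<phi> x"
proof -
  define y where "y = n x - 1"
  have y: "0 \<le> y" "(28 + 16 * \<sigma>) * y \<le> 1"
    using n_ge_one density_close_to_one[OF assms] assms sigma_nonneg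
    unfolding y_def density_window_def by (simp_all add: field_simps)
  moreover have "\<phi> x = wave_potential \<sigma> (V + \<gamma> * \<epsilon>) (1 + y)"
    unfolding y_def using phi_eq_wave_potential by simp
  ultimately have "\<bar>\<phi> x - y\<bar> \<le> y / 2"
    using abs_wave_potential_minus_le_half[OF sigma_nonneg speed_square] speed_excess_bounds by simp
  then have "y \<le> 2 * \<phi> x" unfolding abs_le_iff by linarith
  with y show "0 \<le> n x - 1" "(28 + 16 * \<sigma>) * (n x - 1) \<le> 1" "n x - 1 \<le> 2 * \<phi> x"
    unfolding y_def by simp_all
qed

lemma residual_eq:
  "residual x = (exp (\<phi> x) - 1 - (n x - 1) - d * \<phi> x + (1 + \<sigma>) * (\<phi> x)^2) + (\<gamma> * \<epsilon>)^2 * \<phi> x"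
  unfolding residual_def wave_speed_square[OF sigma_nonneg, symmetric] by (simp add: algebra_simps)

lemma residual_le:
  assumes "0 \<le> x0" "\<phi> x0 \<le> a * \<epsilon>" "x0 \<le> x"
  shows "\<bar>residual x\<bar> \<le> \<kappa> * \<epsilon>^2 * \<phi> x"
proof -
  define y where "y = n x - 1"
  note y = density_excess_bounds[OF assms, folded y_def]
  have H: "0 \<le> \<phi> x" "\<phi> x \<le> a * \<epsilon>"
    using phi_nonneg antitone(1)[OF assms(1,3)] assms by auto
  have "\<phi> x = wave_potential \<sigma> (V + \<gamma> * \<epsilon>) (1 + y)"
    unfolding y_def using phi_eq_wave_potential by simp
  then have "\<bar>exp (\<phi> x) - 1 - y - d * \<phi> x + (1 + \<sigma>) * (\<phi> x)^2\<bar> \<le> 40 * (1 + \<sigma>)^2 * ((d + y)^2 * y)"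
    using wave_potential_residual[OF sigma_nonneg speed_square] speed_excess_bounds y by simp
  then have "\<bar>residual x\<bar> \<le> 40 * (1 + \<sigma>)^2 * ((d + y)^2 * y) + \<gamma>^2 * \<epsilon>^2 * \<phi> x"
    unfolding residual_eq y_def[symmetric] using H(1)
    by (simp add: power_mult_distrib order_trans[OF abs_triangle_ineq])
  also have "\<dots> \<le> 40 * (1 + \<sigma>)^2 * ((2 * V * \<gamma> + \<gamma>^2 + 2 * a)^2 * \<epsilon>^2 * (2 * \<phi> x)) + \<gamma>^2 * \<epsilon>^2 * \<phi> x"
  proof -
    have "d + y \<le> (2 * V * \<gamma> + \<gamma>^2 + 2 * a) * \<epsilon>"
      using speed_excess_bounds(2) y(3) H(2) by (simp add: algebra_simps)
    then have "(d + y)^2 \<le> ((2 * V * \<gamma> + \<gamma>^2 + 2 * a) * \<epsilon>)^2"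
      using speed_excess_bounds(1) y by (intro power_mono) auto
    then have "(d + y)^2 * y \<le> (2 * V * \<gamma> + \<gamma>^2 + 2 * a)^2 * \<epsilon>^2 * (2 * \<phi> x)"
      using y by (intro mult_mono) (auto simp: power_mult_distrib)
    then show ?thesis by (intro add_right_mono mult_left_mono) auto
  qed
  also have "\<dots> = \<kappa> * \<epsilon>^2 * \<phi> x"
    unfolding residual_const_def by (simp add: algebra_simps)
  finally show ?thesis .
qed

lemma wave_energy_le:
  assumes "0 \<le> x0" "\<phi> x0 \<le> a * \<epsilon>" "x0 \<le> x"
  shows "\<bar>wave_energy \<epsilon> V \<gamma> (\<phi> x) (deriv \<phi> x)\<bar> \<le> \<kappa> * \<epsilon>^2 * (\<phi> x)^2 / 2"
proof -
  obtain t where t: "filterlim t at_top sequentially" "(\<lambda>k. \<phi> (t k)) \<longlonglongrightarrow> 0"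
    "(\<lambda>k. wave_energy \<epsilon> V \<gamma> (\<phi> (t k)) (deriv \<phi> (t k))) \<longlonglongrightarrow> 0"
    by (rule wave_energy_vanishes_at_infinity)
  show ?thesis
  proof (rule abs_le_half_square_if_deriv_controlled[OF wave_energy_has_derivative phi_has_derivative(1)])
    show "deriv \<phi> y \<le> 0" if "x0 \<le> y" for y
      using that assms(1) by (intro deriv_phi_nonpos) simp
    show "\<bar>residual y\<bar> \<le> \<kappa> * \<epsilon>^2 * \<phi> y" if "x0 \<le> y" for y
      by (rule residual_le[OF assms(1,2) that])
  qed (use t assms(3) in auto)
qed

lemma amplitude_le: "\<phi> 0 \<le> a * \<epsilon>"
proof (rule ccontr)
  assume "\<not> \<phi> 0 \<le> a * \<epsilon>"
  moreover obtain B where B: "\<And>z. B \<le> z \<Longrightarrow> \<phi> z < a * \<epsilon>"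
    using order_tendstoD(2)[OF limits_at_top(2), of "a * \<epsilon>"] a_pos eps_pos
    unfolding eventually_at_top_linorder by auto
  ultimately have "\<exists>x\<ge>0. x \<le> max 0 B \<and> \<phi> x = a * \<epsilon>"
    by (intro IVT2) (use less_imp_le[OF B[of "max 0 B"]] continuous(2) in auto)
  then obtain x where x: "0 \<le> x" "\<phi> x = a * \<epsilon>" by blast
  have "(a * \<epsilon>)^2 * (V * \<gamma> * \<epsilon>) = - V * \<gamma> * \<epsilon> * (a * \<epsilon>)^2 + V^2 * (a * \<epsilon>)^3 / 3"
    unfolding amplitude_cap_def using V_ge_one by (simp add: field_simps power2_eq_square power3_eq_cube)
  also have "\<dots> \<le> wave_energy \<epsilon> V \<gamma> (\<phi> x) (deriv \<phi> x)"
    unfolding wave_energy_def x(2) using eps_pos by simp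
  also have "\<dots> \<le> \<kappa> * \<epsilon>^2 * (a * \<epsilon>)^2 / 2"
    using wave_energy_le[of x x] x by simp
  finally have "(a * \<epsilon>)^2 * (V * \<gamma> * \<epsilon>) \<le> (a * \<epsilon>)^2 * (\<kappa> * \<epsilon> / 2 * \<epsilon>)"
    by (simp add: algebra_simps power2_eq_square)
  then have "V * \<gamma> * \<epsilon> \<le> \<kappa> * \<epsilon> / 2 * \<epsilon>"
    using a_pos eps_pos by simp
  then have "V * \<gamma> \<le> \<kappa> * \<epsilon> / 2" using eps_pos by simp
  with residual_small show False by simp
qed

lemma crest_estimate: "\<bar>\<phi> 0 / \<epsilon> - n_KdV \<sigma> \<gamma> 0\<bar> \<le> 3 * \<kappa> / (2 * V^2) * \<epsilon>"
proof -
  have "\<bar>wave_energy \<epsilon> V \<gamma> (\<phi> 0) 0\<bar> \<le> \<kappa> * \<epsilon>^2 * (\<phi> 0)^2 / 2"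
    using wave_energy_le[of 0 0] amplitude_le deriv_phi_zero by simp
  moreover have "wave_energy \<epsilon> V \<gamma> (\<phi> 0) 0 = (\<phi> 0)^2 * (V^2 * \<phi> 0 / 3 - V * \<gamma> * \<epsilon>)"
    unfolding wave_energy_def by (simp add: algebra_simps power2_eq_square power3_eq_cube)
  ultimately have "\<bar>V^2 * \<phi> 0 / 3 - V * \<gamma> * \<epsilon>\<bar> \<le> \<kappa> * \<epsilon>^2 / 2"
    using phi_zero_pos by (simp add: abs_mult)
  moreover have pos: "0 < 3 / (V^2 * \<epsilon>)" using V_ge_one eps_pos by simp
  moreover have "\<phi> 0 / \<epsilon> - n_KdV \<sigma> \<gamma> 0 = (V^2 * \<phi> 0 / 3 - V * \<gamma> * \<epsilon>) * (3 / (V^2 * \<epsilon>))"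
    using n_KdV_bounds(1)[OF sigma_nonneg] gamma_pos V_ge_one eps_pos
    by (simp add: field_simps power2_eq_square)
  ultimately have "\<bar>\<phi> 0 / \<epsilon> - n_KdV \<sigma> \<gamma> 0\<bar> \<le> \<kappa> * \<epsilon>^2 / 2 * (3 / (V^2 * \<epsilon>))"
    by (simp only: abs_mult abs_of_pos) (rule mult_right_mono, simp_all)
  also have "\<dots> = 3 * \<kappa> / (2 * V^2) * \<epsilon>"
    using eps_pos by (simp add: field_simps power2_eq_square)
  finally show ?thesis .
qed


lemma residual_div_le: "0 \<le> x \<Longrightarrow> \<bar>residual x / \<epsilon>^2\<bar> \<le> \<kappa> * a * \<epsilon>"
proof -
  assume "0 \<le> x"
  have "\<bar>residual x\<bar> \<le> \<kappa> * \<epsilon>^2 * \<phi> x"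
    using residual_le[OF order_refl amplitude_le \<open>0 \<le> x\<close>] .
  also have "\<dots> \<le> \<kappa> * \<epsilon>^2 * (a * \<epsilon>)"
    using antitone(1)[OF order_refl \<open>0 \<le> x\<close>] amplitude_le eps_pos kappa_pos
    by (intro mult_left_mono) auto
  finally show ?thesis using eps_pos by (simp add: divide_le_eq algebra_simps)
qed

text \<open>In the notation of the paper, \<epsilon> * remainder is \<phi>_R.\<close>
definition remainder :: "real \<Rightarrow> real" where
  "remainder x = \<phi> x / \<epsilon> - n_KdV \<sigma> \<gamma> x"

lemma remainder_has_derivatives:
  "(remainder has_real_derivative deriv \<phi> x / \<epsilon> - deriv (n_KdV \<sigma> \<gamma>) x) (at x)"
  "((\<lambda>x. deriv \<phi> x / \<epsilon> - deriv (n_KdV \<sigma> \<gamma>) x) has_real_derivative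
      deriv (deriv \<phi>) x / \<epsilon> - (2 * V * \<gamma> * n_KdV \<sigma> \<gamma> x - V^2 * (n_KdV \<sigma> \<gamma> x)^2)) (at x)"
  unfolding remainder_def[abs_def]
  by (intro DERIV_diff DERIV_cdivide phi_has_derivative
      n_KdV_derivatives[OF sigma_nonneg less_imp_le[OF gamma_pos]])+

lemma remainder_equation:
  assumes "0 \<le> x"
  shows "\<bar>deriv (deriv \<phi>) x / \<epsilon> - (2 * V * \<gamma> * n_KdV \<sigma> \<gamma> x - V^2 * (n_KdV \<sigma> \<gamma> x)^2)\<bar>
    \<le> (2 * V * \<gamma> + 2 * a * V^2) * \<bar>remainder x\<bar> + \<kappa> * a * \<epsilon>"
proof -
  define F where "F = \<phi> x / \<epsilon>"
  define N where "N = n_KdV \<sigma> \<gamma> x"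
  have "0 \<le> F" "F \<le> a"
    unfolding F_def using phi_nonneg[OF assms] antitone(1)[OF _ assms] amplitude_le eps_pos
    by (auto simp: field_simps)
  moreover have "0 \<le> N" "N \<le> a"
    unfolding N_def using n_KdV_bounds(2) n_KdV_le_amplitude_cap sigma_nonneg gamma_pos by simp_all
  ultimately have "V^2 * (F + N) \<le> V^2 * (2 * a)" "0 \<le> V^2 * (F + N)" "0 \<le> V * \<gamma>"
    using V_ge_one gamma_pos by (simp_all add: mult_left_mono)
  then have coeff: "\<bar>2 * V * \<gamma> - V^2 * (F + N)\<bar> \<le> 2 * V * \<gamma> + 2 * a * V^2"
    unfolding abs_le_iff by (simp add: algebra_simps)
  have second: "deriv (deriv \<phi>) x = (exp (\<phi> x) - n x) / \<epsilon>"
    using poisson[of x] eps_pos by (simp add: field_simps)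
  have "deriv (deriv \<phi>) x / \<epsilon> - (2 * V * \<gamma> * N - V^2 * N^2)
      = (2 * V * \<gamma> - V^2 * (F + N)) * (F - N) + residual x / \<epsilon>^2"
    unfolding second F_def residual_def using eps_pos by (simp add: field_simps power2_eq_square)
  also have "\<bar>\<dots>\<bar> \<le> (2 * V * \<gamma> + 2 * a * V^2) * \<bar>F - N\<bar> + \<kappa> * a * \<epsilon>"
    using coeff residual_div_le[OF assms]
    by (intro order_trans[OF abs_triangle_ineq] add_mono) (auto simp: abs_mult intro: mult_right_mono)
  finally show ?thesis unfolding F_def N_def remainder_def .
qed

lemma remainder_gronwall:
  assumes "0 \<le> x"
  shows "(remainder x)^2 + (deriv \<phi> x / \<epsilon> - deriv (n_KdV \<sigma> \<gamma>) x)^2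
    \<le> ((3 * \<kappa> / (2 * V^2))^2 + (\<kappa> * a)^2) * \<epsilon>^2 * exp ((2 + (2 * V * \<gamma> + 2 * a * V^2)) * x)"
proof -
  define D' where "D' x = deriv \<phi> x / \<epsilon> - deriv (n_KdV \<sigma> \<gamma>) x" for x
  have dD: "(remainder has_real_derivative D' x) (at x)" for x
    unfolding D'_def by (rule remainder_has_derivatives(1))
  have dD': "(D' has_real_derivative deriv (deriv \<phi>) x / \<epsilon>
      - (2 * V * \<gamma> * n_KdV \<sigma> \<gamma> x - V^2 * (n_KdV \<sigma> \<gamma> x)^2)) (at x)" for x
    unfolding D'_def[abs_def] by (rule remainder_has_derivatives(2))
  have "(remainder x)^2 + (D' x)^2
      \<le> ((remainder 0)^2 + (D' 0)^2 + (\<kappa> * a * \<epsilon>)^2) * exp ((2 + (2 * V * \<gamma> + 2 * a * V^2)) * x)"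
  proof (rule second_order_gronwall[OF dD dD' remainder_equation _ _ assms])
    show "0 \<le> 2 * V * \<gamma> + 2 * a * V^2" "0 \<le> \<kappa> * a * \<epsilon>"
      using V_ge_one gamma_pos a_pos eps_pos kappa_pos by simp_all
  qed
  also have "\<dots> \<le> ((3 * \<kappa> / (2 * V^2))^2 + (\<kappa> * a)^2) * \<epsilon>^2 * exp ((2 + (2 * V * \<gamma> + 2 * a * V^2)) * x)"
  proof (rule mult_right_mono)
    have "\<bar>remainder 0\<bar> \<le> 3 * \<kappa> / (2 * V^2) * \<epsilon>"
      unfolding remainder_def by (rule crest_estimate)
    then have "(remainder 0)^2 \<le> (3 * \<kappa> / (2 * V^2) * \<epsilon>)^2"
      by (metis abs_ge_zero power2_abs power_mono)
    also have "\<dots> = (3 * \<kappa> / (2 * V^2))^2 * \<epsilon>^2" by (rule power_mult_distrib)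
    finally have "(remainder 0)^2 \<le> (3 * \<kappa> / (2 * V^2))^2 * \<epsilon>^2" .
    moreover have "(\<kappa> * a * \<epsilon>)^2 = (\<kappa> * a)^2 * \<epsilon>^2" by (rule power_mult_distrib)
    moreover have "D' 0 = 0"
      unfolding D'_def using deriv_phi_zero n_KdV_derivatives(3) sigma_nonneg gamma_pos by simp
    ultimately show "(remainder 0)^2 + (D' 0)^2 + (\<kappa> * a * \<epsilon>)^2 \<le> ((3 * \<kappa> / (2 * V^2))^2 + (\<kappa> * a)^2) * \<epsilon>^2"
      by (simp add: distrib_right)
  qed simp
  finally show ?thesis unfolding D'_def .
qed

theorem kdv_remainder_bound:
  assumes "0 \<le> x"
  shows "\<bar>deriv (\<lambda>x. \<phi> x - \<epsilon> * n_KdV \<sigma> \<gamma> x) x\<bar>^2 + \<bar>\<phi> x - \<epsilon> * n_KdV \<sigma> \<gamma> x\<bar>^2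
    \<le> ((3 * \<kappa> / (2 * V^2))^2 + (\<kappa> * a)^2) * exp ((2 + (2 * V * \<gamma> + 2 * a * V^2)) * x) * \<epsilon>^4"
proof -
  have "((\<lambda>x. \<phi> x - \<epsilon> * n_KdV \<sigma> \<gamma> x) has_real_derivative deriv \<phi> x - \<epsilon> * deriv (n_KdV \<sigma> \<gamma>) x) (at x)"
    by (intro DERIV_diff DERIV_cmult phi_has_derivative
        n_KdV_derivatives(1)[OF sigma_nonneg less_imp_le[OF gamma_pos]])
  then have deriv_eq: "deriv (\<lambda>x. \<phi> x - \<epsilon> * n_KdV \<sigma> \<gamma> x) x = \<epsilon> * (deriv \<phi> x / \<epsilon> - deriv (n_KdV \<sigma> \<gamma>) x)"
    using eps_pos by (simp add: DERIV_imp_deriv field_simps)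
  have eq: "\<phi> x - \<epsilon> * n_KdV \<sigma> \<gamma> x = \<epsilon> * remainder x"
    unfolding remainder_def using eps_pos by (simp add: field_simps)
  have "\<bar>\<epsilon> * A\<bar>^2 + \<bar>\<epsilon> * R\<bar>^2 = \<epsilon>^2 * (R^2 + A^2)" for A R :: real
    by (simp add: power_mult_distrib distrib_left)
  then have "\<bar>deriv (\<lambda>x. \<phi> x - \<epsilon> * n_KdV \<sigma> \<gamma> x) x\<bar>^2 + \<bar>\<phi> x - \<epsilon> * n_KdV \<sigma> \<gamma> x\<bar>^2
      = \<epsilon>^2 * ((remainder x)^2 + (deriv \<phi> x / \<epsilon> - deriv (n_KdV \<sigma> \<gamma>) x)^2)"
    unfolding deriv_eq eq .
  also have "\<dots> \<le> \<epsilon>^2 * (((3 * \<kappa> / (2 * V^2))^2 + (\<kappa> * a)^2) * \<epsilon>^2 * exp ((2 + (2 * V * \<gamma> + 2 * a * V^2)) * x))"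
    using remainder_gronwall[OF assms] by (intro mult_left_mono) auto
  finally show ?thesis by (simp add: algebra_simps power4_eq_xxxx power2_eq_square)
qed

end

lemma eventually_small_solitary_wave:
  assumes "0 \<le> \<sigma>" "0 < \<gamma>"
  shows "eventually (\<lambda>\<epsilon>. \<forall>n u \<phi>. is_solitary_wave \<sigma> \<gamma> \<epsilon> n u \<phi> \<longrightarrow> small_solitary_wave \<sigma> \<gamma> \<epsilon> n u \<phi>)
           (at_right 0)"
proof -
  have small: "eventually (\<lambda>\<epsilon>. c * \<epsilon> < b) (at_right 0)" if "0 < b" for b c :: real
  proof (rule order_tendstoD(2)[OF _ that])
    show "((\<lambda>\<epsilon>. c * \<epsilon>) \<longlongrightarrow> 0) (at_right 0)"
      by (rule tendsto_eq_intros tendsto_ident_at refl | simp)+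
  qed
  have "0 < \<gamma> * wave_speed \<sigma>" "0 < density_window \<sigma>"
    using assms wave_speed_ge_one[OF assms(1)] unfolding density_window_def by simp_all
  then have "eventually (\<lambda>\<epsilon>. 0 < \<epsilon> \<and> 1 * \<epsilon> < 1 \<and> (2 * wave_speed \<sigma> * \<gamma> + \<gamma>^2) * \<epsilon> < 1/4
      \<and> (2 * amplitude_cap \<sigma> \<gamma>) * \<epsilon> < density_window \<sigma>
      \<and> residual_const \<sigma> \<gamma> * \<epsilon> < 2 * wave_speed \<sigma> * \<gamma>) (at_right 0)"
    by (intro eventually_conj eventually_at_right_less small) simp_all
  then show ?thesis
    by eventually_elim
       (use assms in \<open>auto simp: small_solitary_wave_def small_solitary_wave_axioms_def solitary_wave_def\<close>)
qed

lemma kdv_remainder_uniform_bound: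
  assumes "0 \<le> \<sigma>" "0 < \<gamma>"
  obtains \<epsilon>1 C \<Lambda> :: real where "0 < \<epsilon>1" "0 < C" "0 \<le> \<Lambda>"
    "\<And>\<epsilon> n u \<phi> \<xi>. 0 < \<epsilon> \<Longrightarrow> \<epsilon> < \<epsilon>1 \<Longrightarrow> is_solitary_wave \<sigma> \<gamma> \<epsilon> n u \<phi> \<Longrightarrow> 0 \<le> \<xi> \<Longrightarrow>
       \<bar>deriv (\<lambda>x. \<phi> x - \<epsilon> * n_KdV \<sigma> \<gamma> x) \<xi>\<bar>^2 + \<bar>\<phi> \<xi> - \<epsilon> * n_KdV \<sigma> \<gamma> \<xi>\<bar>^2
         \<le> C * exp (\<Lambda> * \<xi>) * \<epsilon>^4"
proof -
  obtain \<epsilon>1 where "0 < \<epsilon>1" and small: "\<And>\<epsilon> n u \<phi>. 0 < \<epsilon> \<Longrightarrow> \<epsilon> < \<epsilon>1 \<Longrightarrow>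
      is_solitary_wave \<sigma> \<gamma> \<epsilon> n u \<phi> \<Longrightarrow> small_solitary_wave \<sigma> \<gamma> \<epsilon> n u \<phi>"
    using eventually_small_solitary_wave[OF assms] unfolding eventually_at_right_field by blast
  define V where "V = wave_speed \<sigma>"
  define a where "a = amplitude_cap \<sigma> \<gamma>"
  define \<kappa> where "\<kappa> = residual_const \<sigma> \<gamma>"
  have "0 < \<kappa>" "0 < a" "1 \<le> V"
    unfolding \<kappa>_def a_def V_def
    using residual_const_pos amplitude_cap_pos wave_speed_ge_one assms by simp_all
  then have "0 < (3 * \<kappa> / (2 * V^2))^2 + (\<kappa> * a)^2" "0 \<le> 2 + (2 * V * \<gamma> + 2 * a * V^2)"
    using assms by (simp_all add: add_nonneg_pos)
  then show thesis
  proof (rule that[OF \<open>0 < \<epsilon>1\<close>])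
    fix \<epsilon> \<xi> :: real and n u \<phi> :: "real \<Rightarrow> real"
    assume wave: "0 < \<epsilon>" "\<epsilon> < \<epsilon>1" "is_solitary_wave \<sigma> \<gamma> \<epsilon> n u \<phi>" and "0 \<le> \<xi>"
    have "small_solitary_wave \<sigma> \<gamma> \<epsilon> n u \<phi>" by (rule small[OF wave])
    from small_solitary_wave.kdv_remainder_bound[OF this \<open>0 \<le> \<xi>\<close>]
    show "\<bar>deriv (\<lambda>x. \<phi> x - \<epsilon> * n_KdV \<sigma> \<gamma> x) \<xi>\<bar>^2 + \<bar>\<phi> \<xi> - \<epsilon> * n_KdV \<sigma> \<gamma> \<xi>\<bar>^2
        \<le> ((3 * \<kappa> / (2 * V^2))^2 + (\<kappa> * a)^2) * exp ((2 + (2 * V * \<gamma> + 2 * a * V^2)) * \<xi>) * \<epsilon>^4"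
      unfolding V_def a_def \<kappa>_def .
  qed
qed

theorem proposition4p5:
  fixes \<sigma> \<gamma> :: real
  assumes "\<sigma> \<ge> 0" and "\<gamma> > 0"
  shows "\<exists>\<epsilon>1>0. \<forall>\<xi>s>0. \<exists>C>0. \<forall>\<epsilon> n u \<phi>.
           0 < \<epsilon> \<and> \<epsilon> < \<epsilon>1 \<and> is_solitary_wave \<sigma> \<gamma> \<epsilon> n u \<phi> \<longrightarrow>
           (\<forall>\<xi>\<in>{0..\<xi>s}.
              \<bar>deriv (\<lambda>x. \<phi> x - \<epsilon> * n_KdV \<sigma> \<gamma> x) \<xi>\<bar>^2
              + \<bar>\<phi> \<xi> - \<epsilon> * n_KdV \<sigma> \<gamma> \<xi>\<bar>^2 \<le> C * \<epsilon>^4)"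
proof -
  obtain \<epsilon>1 C \<Lambda> where "0 < \<epsilon>1" "0 < C" "0 \<le> \<Lambda>" and bound:
    "\<And>\<epsilon> n u \<phi> \<xi>. 0 < \<epsilon> \<Longrightarrow> \<epsilon> < \<epsilon>1 \<Longrightarrow> is_solitary_wave \<sigma> \<gamma> \<epsilon> n u \<phi> \<Longrightarrow> 0 \<le> \<xi> \<Longrightarrow>
       \<bar>deriv (\<lambda>x. \<phi> x - \<epsilon> * n_KdV \<sigma> \<gamma> x) \<xi>\<bar>^2 + \<bar>\<phi> \<xi> - \<epsilon> * n_KdV \<sigma> \<gamma> \<xi>\<bar>^2
         \<le> C * exp (\<Lambda> * \<xi>) * \<epsilon>^4"
    using kdv_remainder_uniform_bound[OF assms] by blast
  have exp_le: "C * exp (\<Lambda> * \<xi>) * \<epsilon>^4 \<le> C * exp (\<Lambda> * \<xi>s) * \<epsilon>^4" if "\<xi> \<le> \<xi>s" for \<xi> \<xi>s \<epsilon> :: real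
    using that \<open>0 < C\<close> \<open>0 \<le> \<Lambda>\<close> by (intro mult_right_mono mult_left_mono) (auto intro: mult_left_mono)
  show ?thesis
  proof (rule exI[of _ \<epsilon>1], intro conjI allI impI \<open>0 < \<epsilon>1\<close>)
    fix \<xi>s :: real
    assume "0 < \<xi>s"
    show "\<exists>C>0. \<forall>\<epsilon> n u \<phi>. 0 < \<epsilon> \<and> \<epsilon> < \<epsilon>1 \<and> is_solitary_wave \<sigma> \<gamma> \<epsilon> n u \<phi> \<longrightarrow>
           (\<forall>\<xi>\<in>{0..\<xi>s}. \<bar>deriv (\<lambda>x. \<phi> x - \<epsilon> * n_KdV \<sigma> \<gamma> x) \<xi>\<bar>^2
              + \<bar>\<phi> \<xi> - \<epsilon> * n_KdV \<sigma> \<gamma> \<xi>\<bar>^2 \<le> C * \<epsilon>^4)"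
    proof (intro exI[of _ "C * exp (\<Lambda> * \<xi>s)"] conjI allI impI ballI)
      show "0 < C * exp (\<Lambda> * \<xi>s)" using \<open>0 < C\<close> by simp
      fix \<epsilon> n u \<phi> \<xi>
      assume "0 < \<epsilon> \<and> \<epsilon> < \<epsilon>1 \<and> is_solitary_wave \<sigma> \<gamma> \<epsilon> n u \<phi>" "\<xi> \<in> {0..\<xi>s}"
      then show "\<bar>deriv (\<lambda>x. \<phi> x - \<epsilon> * n_KdV \<sigma> \<gamma> x) \<xi>\<bar>^2 + \<bar>\<phi> \<xi> - \<epsilon> * n_KdV \<sigma> \<gamma> \<xi>\<bar>^2
          \<le> C * exp (\<Lambda> * \<xi>s) * \<epsilon>^4"
        using order_trans[OF bound[of \<epsilon> n u \<phi> \<xi>] exp_le[of \<xi> \<xi>s \<epsilon>]] by simp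
    qed
  qed
qed

end
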